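(* Let $D=\{D_1,\dots,D_n\}$ be a set of pairwise disjoint closed balls in $\mathbb{R}^d$ and $s>0$. The set $W$ output by the algorithm ComputeWSPD$(D,s)$ described below contains $O(n)$ pairs, where the constant in the $O$-notation depends only on $s$ and $d$.
   Context: Ball $D_i$ has center $c_i$ and radius $r_i\ge0$. $R(X)$ is the smallest axis-parallel box containing $X$, $L_{\max}(R)$ its longest side length; for balls $C,C'$ with centers $c,c'$ and radii $r,r'$, $d(C,C')=|cc'|-(r+r')$. Algorithm ComputeWSPD$(D,s)$: let $F=\{c_1,\dots,c_n\}$; let $T$ be a (Callahan–Kosaraju) split tree of $F$: a binary tree whose leaves are the points of $F$, each node $u$ storing $R(S_u)$ where $S_u$ is the set of points at leaves of the subtree of $u$; let $W'$ be the well-separated pair decomposition of $F$ w.r.t. $3s+6$ computed from $T$ by the Callahan–Kosaraju algorithm ($O(n)$ pairs, each of the form $\{S_v,S_w\}$ for nodes $v,w$ of $T$). For $X'\subseteq F$ let $X$ denote the set of balls whose centers lie in $X'$. Start with $W=\emptyset$; for each $\{A',B'\}\in W'$: if $|A'|=|B'|=1$ or $|A'|,|B'|>1$, add $\{A,B\}$ to $W$; otherwise, say $A'=\{c_k\}=S_v$ ($v$ a leaf) and $B'=S_w$, add to $W$ the pairs produced by FindPairs$(v,w)$. FindPairs$(v,w)$ with $S_v=\{c_k\}$: let $C_w$ be the ball of radius $(\sqrt d/2)L_{\max}(R(S_w))$ centered at the center of $R(S_w)$; if $d(c_k,C_w)-r_k\ge(3s+4)\,\mathrm{radius}(C_w)$,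 return the single pair $\{\{D_k\},\text{balls with centers in }S_w\}$; otherwise return the union of FindPairs$(v,w_l)$ and FindPairs$(v,w_r)$ for the two children $w_l,w_r$ of $w$. *)

theory Defs
  imports "HOL-Analysis.Analysis"
begin

datatype 'a stree = SLeaf 'a | SNode "'a stree" "'a stree"

fun leaves :: "'a stree \<Rightarrow> 'a list" where
  "leaves (SLeaf p) = [p]"
| "leaves (SNode l r) = leaves l @ leaves r"

definition pts :: "'a stree \<Rightarrow> 'a set" where
  "pts t = set (leaves t)"

definition bb_lo :: "(real^'d) set \<Rightarrow> 'd \<Rightarrow> real" where
  "bb_lo X i = Min ((\<lambda>p. p $ i) ` X)"

definition bb_hi :: "(real^'d) set \<Rightarrow> 'd \<Rightarrow> real" where
  "bb_hi X i = Max ((\<lambda>p. p $ i) ` X)"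

definition bbox :: "(real^'d) set \<Rightarrow> (real^'d) set" where
  "bbox X = cbox (\<chi> i. bb_lo X i) (\<chi> i. bb_hi X i)"

definition Lmax :: "(real^'d) set \<Rightarrow> real" where
  "Lmax X = Max (range (\<lambda>i. bb_hi X i - bb_lo X i))"

definition bb_center :: "(real^'d) set \<Rightarrow> real^'d" where
  "bb_center X = (\<chi> i. (bb_lo X i + bb_hi X i) / 2)"

text \<open>Radius (sqrt d / 2) L_max(R(X)) of the ball circumscribing R(X).\<close>
definition encl_rad :: "(real^'d) set \<Rightarrow> real" where
  "encl_rad X = sqrt (real CARD('d)) / 2 * Lmax X"

fun split_tree :: "(real^'d) stree \<Rightarrow> bool" where
  "split_tree (SLeaf p) = True"
| "split_tree (SNode l r) =
     (split_tree l \<and> split_tree r \<and>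
      (let S = pts (SNode l r) in
       \<exists>i. bb_hi S i - bb_lo S i = Lmax S \<and>
         (let m = (bb_lo S i + bb_hi S i) / 2 in
            ((\<forall>p\<in>pts l. p $ i \<le> m) \<and> (\<forall>p\<in>pts r. m \<le> p $ i)) \<or>
            ((\<forall>p\<in>pts r. p $ i \<le> m) \<and> (\<forall>p\<in>pts l. m \<le> p $ i)))))"

text \<open>Well-separation test w.r.t. s of two point sets, via balls of common radius
  rho = max of the circumscribing radii of their bounding boxes.\<close>
definition well_sep :: "real \<Rightarrow> (real^'d) set \<Rightarrow> (real^'d) set \<Rightarrow> bool" where
  "well_sep s A B =
     (let \<rho> = max (encl_rad A) (encl_rad B)
      in dist (bb_center A) (bb_center B) - 2 * \<rho> \<ge> s * \<rho>)"

fun ck_findpairs :: "real \<Rightarrow> (real^'d) stree \<Rightarrow> (real^'d) stree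
                      \<Rightarrow> ((real^'d) stree \<times> (real^'d) stree) list" where
  "ck_findpairs s v w =
     (if well_sep s (pts v) (pts w) then [(v, w)]
      else if Lmax (pts v) \<le> Lmax (pts w) then
        (case w of SLeaf _ \<Rightarrow> [(v, w)]
                 | SNode wl wr \<Rightarrow> ck_findpairs s v wl @ ck_findpairs s v wr)
      else
        (case v of SLeaf _ \<Rightarrow> [(v, w)]
                 | SNode vl vr \<Rightarrow> ck_findpairs s vl w @ ck_findpairs s vr w))"

text \<open>The WSPD W' of the leaf set of the tree: FindPairs on the two children of
  every internal node. Pairs are pairs of nodes v,w (representing S_v, S_w).\<close>
fun ck_wspd :: "real \<Rightarrow> (real^'d) stree \<Rightarrow> ((real^'d) stree \<times> (real^'d) stree) list" where
  "ck_wspd s (SLeaf p) = []"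
| "ck_wspd s (SNode l r) = ck_wspd s l @ ck_wspd s r @ ck_findpairs s l r"

text \<open>A ball is represented by (center, radius). rad gives the radius of the ball
  with a given center.\<close>
definition balls_of :: "(real^'d \<Rightarrow> real) \<Rightarrow> (real^'d) set \<Rightarrow> ((real^'d) \<times> real) set" where
  "balls_of rad X = (\<lambda>q. (q, rad q)) ` X"

text \<open>FindPairs(v,w) with S_v = {p}.  d(p, C_w) = |p cen| - radius(C_w).\<close>
fun findpairs_ball :: "real \<Rightarrow> ((real^'d) \<Rightarrow> real) \<Rightarrow> (real^'d) \<Rightarrow> (real^'d) stree
                       \<Rightarrow> (((real^'d) \<times> real) set \<times> ((real^'d) \<times> real) set) list" where
  "findpairs_ball s rad p w =
     (if (dist p (bb_center (pts w)) - encl_rad (pts w)) - rad p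
           \<ge> (3 * s + 4) * encl_rad (pts w)
      then [({(p, rad p)}, balls_of rad (pts w))]
      else (case w of SLeaf _ \<Rightarrow> [({(p, rad p)}, balls_of rad (pts w))]
                    | SNode wl wr \<Rightarrow> findpairs_ball s rad p wl @ findpairs_ball s rad p wr))"

fun process_pair :: "real \<Rightarrow> (real^'d \<Rightarrow> real) \<Rightarrow> (real^'d) stree \<times> (real^'d) stree
                     \<Rightarrow> (((real^'d) \<times> real) set \<times> ((real^'d) \<times> real) set) list" where
  "process_pair s rad (SLeaf p, SNode wl wr) = findpairs_ball s rad p (SNode wl wr)"
| "process_pair s rad (SNode vl vr, SLeaf q) = findpairs_ball s rad q (SNode vl vr)"
| "process_pair s rad (v, w) = [(balls_of rad (pts v), balls_of rad (pts w))]"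

text \<open>ComputeWSPD(D,s) for balls D_i = cball (c i) (r i), i < n, using split tree T
  of the centers. The output W is returned as a list of pairs (so its length
  counts the produced pairs).\<close>
definition compute_wspd :: "real \<Rightarrow> (nat \<Rightarrow> real^'d) \<Rightarrow> (nat \<Rightarrow> real) \<Rightarrow> nat
     \<Rightarrow> (real^'d) stree \<Rightarrow> (((real^'d) \<times> real) set \<times> ((real^'d) \<times> real) set) list" where
  "compute_wspd s c r n T =
     (let rad = (\<lambda>p. r (inv_into {..<n} c p))
      in concat (map (process_pair s rad) (ck_wspd (3 * s + 6) T)))"

end

theory Submission
  imports Defs
begin

text \<open>Every pair of the Callahan--Kosaraju decomposition is either a pair of siblings or a pair
  \<open>(x, y)\<close> created when a node \<open>P\<close>, not well separated from \<open>x\<close>, was split into its child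
  \<open>y\<close>; then \<open>x\<close> is no larger than \<open>P\<close> and its parent no smaller.  For fixed \<open>P\<close> and
  \<open>y\<close> the possible \<open>x\<close> are pairwise disjoint, lie near \<open>P\<close>, and own disjoint cells of
  the split tree with sides at least \<open>Lmax P / 2\<close>, so a grid packing argument bounds their
  number.  Hence the decomposition has \<open>O(n)\<close> pairs.

  FindPairs splits a pair of a leaf \<open>p\<close> and a node \<open>w\<close> at each node \<open>u\<close> below \<open>w\<close> whose
  enclosing ball is not separated from the ball around \<open>p\<close>.  As \<open>p\<close> is far from \<open>w\<close>, that
  ball is then large compared with \<open>u\<close> and close to it.  Charging the split to \<open>u\<close>, the
  centres charging \<open>u\<close> are distinct and their balls are disjoint, so a packing argument
  bounds the charge of every node.\<close>

section \<open>Subtrees of split trees\<close>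

fun subtrees :: "'a stree \<Rightarrow> 'a stree list" where
  "subtrees (SLeaf p) = [SLeaf p]"
| "subtrees (SNode l r) = SNode l r # subtrees l @ subtrees r"

fun children :: "'a stree \<Rightarrow> 'a stree list" where
  "children (SLeaf p) = []"
| "children (SNode l r) = [l, r]"

fun is_node :: "'a stree \<Rightarrow> bool" where
  "is_node (SLeaf p) = False"
| "is_node (SNode l r) = True"

lemma pts_SLeaf [simp]: "pts (SLeaf p) = {p}"
  by (simp add: pts_def)

lemma pts_SNode [simp]: "pts (SNode l r) = pts l \<union> pts r"
  by (simp add: pts_def)

lemma finite_pts [simp]: "finite (pts t)"
  by (simp add: pts_def)

lemma pts_not_empty [simp]: "pts t \<noteq> {}"
  by (induction t) auto

lemma subtree_self: "t \<in> set (subtrees t)"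
  by (cases t) auto

lemma subtree_trans: "u \<in> set (subtrees t) \<Longrightarrow> v \<in> set (subtrees u) \<Longrightarrow> v \<in> set (subtrees t)"
  by (induction t) auto

lemma children_subtree: "x \<in> set (children P) \<Longrightarrow> P \<in> set (subtrees t) \<Longrightarrow> x \<in> set (subtrees t)"
  using subtree_trans[of P t x] by (cases P) (auto simp: subtree_self)

lemma subtree_child_subtree: "c \<in> set (children w) \<Longrightarrow> u \<in> set (subtrees c) \<Longrightarrow> u \<in> set (subtrees w)"
  by (cases w) auto

lemma distinct_leaves_child: "c \<in> set (children w) \<Longrightarrow> distinct (leaves w) \<Longrightarrow> distinct (leaves c)"
  by (cases w) auto

lemma card_children_le: "card (set (children P)) \<le> 2"
  by (cases P) (auto simp: card_insert_if)

lemma pts_subtree_subset: "u \<in> set (subtrees t) \<Longrightarrow> pts u \<subseteq> pts t"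
  by (induction t) auto

lemma pts_child_subset: "x \<in> set (children P) \<Longrightarrow> pts x \<subseteq> pts P"
  by (cases P) auto

lemma distinct_leaves_subtree: "distinct (leaves t) \<Longrightarrow> u \<in> set (subtrees t) \<Longrightarrow> distinct (leaves u)"
  by (induction t) auto

lemma pts_children_disjoint: "distinct (leaves (SNode l r)) \<Longrightarrow> pts l \<inter> pts r = {}"
  by (simp add: pts_def)

lemma length_subtrees: "length (subtrees t) + 1 = 2 * length (leaves t)"
  by (induction t) auto

lemma size_subtree_le: "u \<in> set (subtrees t) \<Longrightarrow> size u \<le> size t"
  by (induction t) auto

lemma subtrees_SNode_disjoint:
  assumes "distinct (leaves (SNode l r))"
  shows "set (subtrees l) \<inter> set (subtrees r) = {}"
    and "SNode l r \<notin> set (subtrees l)" and "SNode l r \<notin> set (subtrees r)"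
proof -
  show "set (subtrees l) \<inter> set (subtrees r) = {}"
  proof (rule ccontr)
    assume "set (subtrees l) \<inter> set (subtrees r) \<noteq> {}"
    then obtain u where "pts u \<subseteq> pts l" "pts u \<subseteq> pts r"
      using pts_subtree_subset by blast
    then show False
      using pts_children_disjoint[OF assms] pts_not_empty[of u] by blast
  qed
  show "SNode l r \<notin> set (subtrees l)" "SNode l r \<notin> set (subtrees r)"
    using size_subtree_le[of "SNode l r" l] size_subtree_le[of "SNode l r" r] by auto
qed

section \<open>Bounding boxes\<close>

lemma bb_lo_le: "finite X \<Longrightarrow> p \<in> X \<Longrightarrow> bb_lo X i \<le> p $ i"
  unfolding bb_lo_def by (rule Min_le) auto

lemma bb_hi_ge: "finite X \<Longrightarrow> p \<in> X \<Longrightarrow> p $ i \<le> bb_hi X i"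
  unfolding bb_hi_def by (rule Max_ge) auto

lemma bb_lo_attained: "finite X \<Longrightarrow> X \<noteq> {} \<Longrightarrow> \<exists>p\<in>X. p $ i = bb_lo X i"
proof -
  assume "finite X" "X \<noteq> {}"
  then have "Min ((\<lambda>p. p $ i) ` X) \<in> (\<lambda>p. p $ i) ` X" by (intro Min_in) auto
  then show ?thesis unfolding bb_lo_def by auto
qed

lemma bb_hi_attained: "finite X \<Longrightarrow> X \<noteq> {} \<Longrightarrow> \<exists>p\<in>X. p $ i = bb_hi X i"
proof -
  assume "finite X" "X \<noteq> {}"
  then have "Max ((\<lambda>p. p $ i) ` X) \<in> (\<lambda>p. p $ i) ` X" by (intro Max_in) auto
  then show ?thesis unfolding bb_hi_def by auto
qed

lemma bb_lo_le_hi: "finite X \<Longrightarrow> X \<noteq> {} \<Longrightarrow> bb_lo X i \<le> bb_hi X i"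
  using bb_lo_le[of X _ i] bb_hi_ge[of X _ i] order_trans by blast

lemma side_le_Lmax: "bb_hi X i - bb_lo X i \<le> Lmax X"
  unfolding Lmax_def by (rule Max_ge) auto

lemma Lmax_attained: "\<exists>i. Lmax X = bb_hi X i - bb_lo X i"
proof -
  have "Lmax X \<in> range (\<lambda>i. bb_hi X i - bb_lo X i)"
    unfolding Lmax_def by (rule Max_in) auto
  then show ?thesis by auto
qed

lemma Lmax_nonneg: "finite X \<Longrightarrow> X \<noteq> {} \<Longrightarrow> 0 \<le> Lmax X"
  using bb_lo_le_hi[of X undefined] side_le_Lmax[of X undefined] by linarith

lemma bb_lo_antimono: "finite Y \<Longrightarrow> X \<subseteq> Y \<Longrightarrow> X \<noteq> {} \<Longrightarrow> bb_lo Y i \<le> bb_lo X i"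
proof -
  assume a: "finite Y" "X \<subseteq> Y" "X \<noteq> {}"
  then obtain p where "p \<in> X" "p $ i = bb_lo X i"
    using bb_lo_attained[of X i] finite_subset by blast
  then show ?thesis
    using bb_lo_le[of Y p i] a by auto
qed

lemma bb_hi_mono: "finite Y \<Longrightarrow> X \<subseteq> Y \<Longrightarrow> X \<noteq> {} \<Longrightarrow> bb_hi X i \<le> bb_hi Y i"
proof -
  assume a: "finite Y" "X \<subseteq> Y" "X \<noteq> {}"
  then obtain p where "p \<in> X" "p $ i = bb_hi X i"
    using bb_hi_attained[of X i] finite_subset by blast
  then show ?thesis
    using bb_hi_ge[of Y p i] a by auto
qed

lemma Lmax_mono:
  assumes "finite Y" "X \<subseteq> Y" "X \<noteq> {}"
  shows "Lmax X \<le> Lmax Y"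
proof -
  obtain i where "Lmax X = bb_hi X i - bb_lo X i"
    using Lmax_attained by blast
  also have "\<dots> \<le> bb_hi Y i - bb_lo Y i"
    using bb_lo_antimono[OF assms] bb_hi_mono[OF assms] by (simp add: diff_mono)
  also have "\<dots> \<le> Lmax Y"
    by (rule side_le_Lmax)
  finally show ?thesis .
qed

lemma Lmax_child_le: "x \<in> set (children P) \<Longrightarrow> Lmax (pts x) \<le> Lmax (pts P)"
  by (rule Lmax_mono) (simp_all add: pts_child_subset)

lemma encl_rad_mono: "finite Y \<Longrightarrow> X \<subseteq> Y \<Longrightarrow> X \<noteq> {} \<Longrightarrow> encl_rad X \<le> encl_rad Y"
  unfolding encl_rad_def by (intro mult_left_mono Lmax_mono) auto

lemma encl_rad_nonneg: "finite X \<Longrightarrow> X \<noteq> {} \<Longrightarrow> 0 \<le> encl_rad X"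
  unfolding encl_rad_def by (simp add: Lmax_nonneg)

lemma Lmax_singleton [simp]: "Lmax {p} = 0"
  by (simp add: Lmax_def bb_lo_def bb_hi_def)

lemma bb_center_singleton [simp]: "bb_center {p} = p"
  by (simp add: bb_center_def bb_lo_def bb_hi_def vec_eq_iff)

lemma encl_rad_singleton [simp]: "encl_rad {p} = 0"
  by (simp add: encl_rad_def)

lemma Lmax_pos:
  assumes "finite X" "p \<in> X" "q \<in> X" "p \<noteq> q"
  shows "0 < Lmax X"
proof -
  obtain i where "p $ i \<noteq> q $ i"
    using assms(4) by (auto simp: vec_eq_iff)
  then have "0 < bb_hi X i - bb_lo X i"
    using assms bb_lo_le[of X p i] bb_hi_ge[of X p i] bb_lo_le[of X q i] bb_hi_ge[of X q i] by linarith
  then show ?thesis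
    using side_le_Lmax[of X i] by linarith
qed

lemma Lmax_SNode_pos:
  assumes "distinct (leaves (SNode l r))"
  shows "0 < Lmax (pts (SNode l r))"
proof -
  obtain p q where "p \<in> pts l" "q \<in> pts r"
    using pts_not_empty[of l] pts_not_empty[of r] by blast
  moreover have "p \<noteq> q"
    using calculation pts_children_disjoint[OF assms] by blast
  ultimately show ?thesis
    by (intro Lmax_pos[of _ p q]) auto
qed

lemma encl_rad_SNode_pos: "distinct (leaves (SNode l r)) \<Longrightarrow> 0 < encl_rad (pts (SNode l r))"
  using Lmax_SNode_pos[of l r] by (simp add: encl_rad_def del: pts_SNode)

lemma norm_le_sqrt_card_mult:
  fixes x :: "real^'d"
  assumes "\<And>i. \<bar>x $ i\<bar> \<le> b"
  shows "norm x \<le> sqrt (real CARD('d)) * b"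
proof -
  have "infnorm x \<le> b"
    unfolding infnorm_cart using assms by (auto intro!: cSup_least)
  have "norm x \<le> sqrt (real CARD('d)) * infnorm x"
    using norm_le_infnorm[of x] by simp
  also have "\<dots> \<le> sqrt (real CARD('d)) * b"
    using \<open>infnorm x \<le> b\<close> by (simp add: mult_left_mono)
  finally show ?thesis .
qed

lemma dist_bb_center_le:
  assumes "\<And>i. bb_lo X i \<le> p $ i \<and> p $ i \<le> bb_hi X i"
  shows "dist p (bb_center X) \<le> encl_rad X"
proof -
  have "\<bar>(p - bb_center X) $ i\<bar> \<le> Lmax X / 2" for i
    using assms[of i] side_le_Lmax[of X i] by (simp add: bb_center_def abs_le_iff field_simps)
  from norm_le_sqrt_card_mult[OF this] show ?thesis
    by (simp add: dist_norm encl_rad_def)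
qed

lemma dist_bb_center_mem: "finite X \<Longrightarrow> p \<in> X \<Longrightarrow> dist p (bb_center X) \<le> encl_rad X"
  by (simp add: dist_bb_center_le bb_lo_le bb_hi_ge)

lemma dist_bb_center_subset:
  assumes "finite Y" "X \<subseteq> Y" "X \<noteq> {}"
  shows "dist (bb_center X) (bb_center Y) \<le> encl_rad Y"
proof (rule dist_bb_center_le)
  fix i
  have "bb_lo X i \<le> bb_hi X i"
    using assms bb_lo_le_hi finite_subset by blast
  then show "bb_lo Y i \<le> bb_center X $ i \<and> bb_center X $ i \<le> bb_hi Y i"
    using bb_lo_antimono[OF assms, of i] bb_hi_mono[OF assms, of i] by (simp add: bb_center_def)
qed

lemma well_sep_commute: "well_sep s A B = well_sep s B A"
  by (simp add: well_sep_def Let_def dist_commute max.commute)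

section \<open>The pairs of the Callahan--Kosaraju decomposition\<close>

declare ck_findpairs.simps [simp del] findpairs_ball.simps [simp del]

lemma ck_findpairs_well_sep:
  "well_sep s (pts v) (pts w) \<Longrightarrow> ck_findpairs s v w = [(v, w)]"
  by (simp add: ck_findpairs.simps)

lemma ck_findpairs_leaf_right:
  "\<not> well_sep s (pts v) (pts w) \<Longrightarrow> Lmax (pts v) \<le> Lmax (pts w) \<Longrightarrow> \<not> is_node w \<Longrightarrow>
   ck_findpairs s v w = [(v, w)]"
  by (cases w) (simp_all add: ck_findpairs.simps)

lemma ck_findpairs_split_right:
  "\<not> well_sep s (pts v) (pts w) \<Longrightarrow> Lmax (pts v) \<le> Lmax (pts w) \<Longrightarrow> is_node w \<Longrightarrow>
   ck_findpairs s v w = concat (map (ck_findpairs s v) (children w))"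
  by (cases w) (simp_all add: ck_findpairs.simps[of s v])

lemma ck_findpairs_split_left:
  "\<not> well_sep s (pts v) (pts w) \<Longrightarrow> Lmax (pts w) < Lmax (pts v) \<Longrightarrow> is_node v \<Longrightarrow>
   ck_findpairs s v w = concat (map (\<lambda>c. ck_findpairs s c w) (children v))"
  by (cases v) (simp_all add: ck_findpairs.simps[of s _ w])

text \<open>The branch of \<open>ck_findpairs\<close> splitting a leaf on the left never occurs: a leaf has
  \<open>Lmax = 0\<close>.\<close>

lemma ck_findpairs_induct [case_names well_sep leaf_right split_right split_left]:
  assumes well_sep: "\<And>v w. well_sep s (pts v) (pts w) \<Longrightarrow> P v w"
    and leaf_right: "\<And>v w. \<not> well_sep s (pts v) (pts w) \<Longrightarrow> Lmax (pts v) \<le> Lmax (pts w) \<Longrightarrow>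
      \<not> is_node w \<Longrightarrow> P v w"
    and split_right: "\<And>v w. \<not> well_sep s (pts v) (pts w) \<Longrightarrow> Lmax (pts v) \<le> Lmax (pts w) \<Longrightarrow>
      is_node w \<Longrightarrow> (\<And>c. c \<in> set (children w) \<Longrightarrow> P v c) \<Longrightarrow> P v w"
    and split_left: "\<And>v w. \<not> well_sep s (pts v) (pts w) \<Longrightarrow> Lmax (pts w) < Lmax (pts v) \<Longrightarrow>
      is_node v \<Longrightarrow> (\<And>c. c \<in> set (children v) \<Longrightarrow> P c w) \<Longrightarrow> P v w"
  shows "P v w"
proof (induction "size v + size w" arbitrary: v w rule: less_induct)
  case less
  consider "well_sep s (pts v) (pts w)"
    | "\<not> well_sep s (pts v) (pts w)" "Lmax (pts v) \<le> Lmax (pts w)"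
    | "\<not> well_sep s (pts v) (pts w)" "Lmax (pts w) < Lmax (pts v)"
    by linarith
  then show ?case
  proof cases
    case 1
    then show ?thesis by (rule well_sep)
  next
    case 2
    show ?thesis
    proof (cases "is_node w")
      case False
      then show ?thesis using 2 leaf_right by blast
    next
      case True
      have "P v c" if "c \<in> set (children w)" for c
        using less that by (cases w) auto
      then show ?thesis using 2 True split_right by blast
    qed
  next
    case 3
    have "is_node v"
      using 3 Lmax_nonneg[of "pts w"] by (cases v) auto
    moreover have "P c w" if "c \<in> set (children v)" for c
      using less that by (cases v) auto
    ultimately show ?thesis using 3 split_left by blast
  qed
qed

definition pair_count :: "('a stree \<times> 'a stree) list \<Rightarrow> 'a \<Rightarrow> 'a \<Rightarrow> nat" where
  "pair_count L p q = length (filter (\<lambda>(x, y). p \<in> pts x \<and> q \<in> pts y) L)"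

definition separates :: "'a stree \<times> 'a stree \<Rightarrow> 'a \<Rightarrow> 'a \<Rightarrow> bool" where
  "separates e p q \<longleftrightarrow> p \<in> pts (fst e) \<and> q \<in> pts (snd e) \<or> q \<in> pts (fst e) \<and> p \<in> pts (snd e)"

lemma pair_count_append [simp]: "pair_count (L1 @ L2) p q = pair_count L1 p q + pair_count L2 p q"
  by (simp add: pair_count_def)

lemma pair_count_ck_findpairs:
  "distinct (leaves v) \<Longrightarrow> distinct (leaves w) \<Longrightarrow>
   pair_count (ck_findpairs s v w) p q = (if p \<in> pts v \<and> q \<in> pts w then 1 else 0)"
proof (induction v w rule: ck_findpairs_induct[of s])
  case (well_sep v w)
  then show ?case by (simp add: ck_findpairs_well_sep pair_count_def)
next
  case (leaf_right v w)
  then show ?case by (simp add: ck_findpairs_leaf_right pair_count_def)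
next
  case (split_right v w)
  then obtain wl wr where "w = SNode wl wr" by (cases w) auto
  with split_right show ?case
    using pts_children_disjoint[of wl wr] by (auto simp: ck_findpairs_split_right)
next
  case (split_left v w)
  then obtain vl vr where "v = SNode vl vr" by (cases v) auto
  with split_left show ?case
    using pts_children_disjoint[of vl vr] by (auto simp: ck_findpairs_split_left)
qed

lemma pair_count_ck_wspd:
  "distinct (leaves T) \<Longrightarrow> pair_count (ck_wspd s T) p q + pair_count (ck_wspd s T) q p
     = (if p \<in> pts T \<and> q \<in> pts T \<and> p \<noteq> q then 1 else 0)"
proof (induction T)
  case (SLeaf x)
  then show ?case by (simp add: pair_count_def)
next
  case (SNode l r)
  let ?c = "\<lambda>L. pair_count L p q + pair_count L q p"
  have l: "distinct (leaves l)" and r: "distinct (leaves r)" and lr: "pts l \<inter> pts r = {}"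
    using SNode.prems pts_children_disjoint by auto
  have "?c (ck_wspd s (SNode l r)) = ?c (ck_wspd s l) + ?c (ck_wspd s r) + ?c (ck_findpairs s l r)"
    by simp
  also have "\<dots> = (if p \<in> pts l \<and> q \<in> pts l \<and> p \<noteq> q then 1 else 0)
      + (if p \<in> pts r \<and> q \<in> pts r \<and> p \<noteq> q then 1 else 0)
      + ((if p \<in> pts l \<and> q \<in> pts r then 1 else 0) + (if q \<in> pts l \<and> p \<in> pts r then 1 else 0))"
    using SNode.IH l r by (simp add: pair_count_ck_findpairs)
  also have "\<dots> = (if p \<in> pts (SNode l r) \<and> q \<in> pts (SNode l r) \<and> p \<noteq> q then 1 else 0)"
    using lr by auto
  finally show ?case .
qed

lemma length_filter_disj_le:
  "length (filter (\<lambda>x. P x \<or> Q x) xs) \<le> length (filter P xs) + length (filter Q xs)"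
  by (induction xs) auto

lemma ck_wspd_separates_unique:
  assumes "distinct (leaves T)" and "e1 \<in> set (ck_wspd s T)" "e2 \<in> set (ck_wspd s T)"
    and "separates e1 p q" "separates e2 p q"
  shows "e1 = e2"
proof (rule ccontr)
  let ?L = "ck_wspd s T"
  assume "e1 \<noteq> e2"
  have "{e1, e2} \<subseteq> set (filter (\<lambda>e. separates e p q) ?L)"
    using assms(2-5) by auto
  then have "card {e1, e2} \<le> card (set (filter (\<lambda>e. separates e p q) ?L))"
    by (rule card_mono[rotated]) simp
  also have "\<dots> \<le> length (filter (\<lambda>e. separates e p q) ?L)"
    by (rule card_length)
  also have "\<dots> \<le> pair_count ?L p q + pair_count ?L q p"
    unfolding pair_count_def separates_def
    by (rule order_trans[OF _ length_filter_disj_le]) (simp add: case_prod_beta)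
  finally show False
    using pair_count_ck_wspd[OF assms(1), of s p q] \<open>e1 \<noteq> e2\<close> by (simp split: if_splits)
qed

lemma distinct_ck_wspd:
  assumes "distinct (leaves T)"
  shows "distinct (ck_wspd s T)"
proof (rule ccontr)
  assume "\<not> distinct (ck_wspd s T)"
  then obtain xs e ys zs where L: "ck_wspd s T = xs @ [e] @ ys @ [e] @ zs"
    using not_distinct_decomp by blast
  obtain p q where "p \<in> pts (fst e)" "q \<in> pts (snd e)"
    using pts_not_empty[of "fst e"] pts_not_empty[of "snd e"] by blast
  then have "2 \<le> pair_count (ck_wspd s T) p q"
    unfolding L by (simp add: pair_count_def case_prod_beta)
  then show False
    using pair_count_ck_wspd[OF assms, of s p q] by (simp split: if_splits)
qed

lemma ck_findpairs_subtrees: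
  assumes "distinct (leaves v)" "distinct (leaves w)" "e \<in> set (ck_findpairs s v w)"
  shows "fst e \<in> set (subtrees v) \<and> snd e \<in> set (subtrees w) \<and>
    (well_sep s (pts (fst e)) (pts (snd e)) \<or> \<not> is_node (fst e) \<and> \<not> is_node (snd e))"
  using assms
proof (induction v w rule: ck_findpairs_induct[of s])
  case (well_sep v w)
  then show ?case by (simp add: ck_findpairs_well_sep subtree_self)
next
  case (leaf_right v w)
  have "\<not> is_node v"
  proof
    assume "is_node v"
    then obtain vl vr where "v = SNode vl vr" by (cases v) auto
    then have "0 < Lmax (pts v)"
      using Lmax_SNode_pos leaf_right.prems(1) by blast
    moreover obtain q where "w = SLeaf q"
      using leaf_right.hyps(3) by (cases w) auto
    ultimately show False
      using leaf_right.hyps(2) by simp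
  qed
  then show ?case
    using leaf_right by (simp add: ck_findpairs_leaf_right subtree_self)
next
  case (split_right v w)
  then obtain c where c: "c \<in> set (children w)" "e \<in> set (ck_findpairs s v c)"
    by (auto simp: ck_findpairs_split_right)
  with split_right show ?case
    using distinct_leaves_child subtree_child_subtree by blast
next
  case (split_left v w)
  then obtain c where c: "c \<in> set (children v)" "e \<in> set (ck_findpairs s c w)"
    by (auto simp: ck_findpairs_split_left)
  with split_left show ?case
    using distinct_leaves_child subtree_child_subtree by blast
qed

lemma ck_wspd_subtrees:
  assumes "distinct (leaves T)" "e \<in> set (ck_wspd s T)"
  shows "fst e \<in> set (subtrees T) \<and> snd e \<in> set (subtrees T) \<and>
    (well_sep s (pts (fst e)) (pts (snd e)) \<or> \<not> is_node (fst e) \<and> \<not> is_node (snd e))"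
  using assms
proof (induction T)
  case (SLeaf x)
  then show ?case by simp
next
  case (SNode l r)
  then have "distinct (leaves l)" "distinct (leaves r)" by auto
  with SNode show ?case
    using ck_findpairs_subtrees[of l r e s] by auto
qed

text \<open>The pairs \<open>(x, y)\<close> produced by \<open>ck_findpairs\<close> after splitting \<open>P\<close> into its child \<open>y\<close>.
  The conditions on sizes are the invariant of the recursion, made explicit by the
  hypotheses on \<open>Pv\<close> and \<open>Pw\<close> in the next lemma.\<close>

definition refined_pair ::
  "real \<Rightarrow> (real^'d) stree set \<Rightarrow> (real^'d) stree \<Rightarrow> (real^'d) stree \<Rightarrow> (real^'d) stree \<Rightarrow> bool"
where
  "refined_pair s ST P x y \<longleftrightarrow>
     P \<in> ST \<and> y \<in> set (children P) \<and> \<not> well_sep s (pts x) (pts P) \<and> Lmax (pts x) \<le> Lmax (pts P) \<and>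
     (\<exists>Px\<in>ST. x \<in> set (children Px) \<and> Lmax (pts P) \<le> Lmax (pts Px))"

lemma ck_findpairs_refined:
  fixes ST :: "(real^'d) stree set"
  assumes closed: "\<And>P c. P \<in> ST \<Longrightarrow> c \<in> set (children P) \<Longrightarrow> c \<in> ST"
  shows "v \<in> ST \<Longrightarrow> w \<in> ST \<Longrightarrow>
    Pv \<in> ST \<Longrightarrow> v \<in> set (children Pv) \<Longrightarrow> Lmax (pts w) \<le> Lmax (pts Pv) \<Longrightarrow>
    Pw \<in> ST \<Longrightarrow> w \<in> set (children Pw) \<Longrightarrow> Lmax (pts v) \<le> Lmax (pts Pw) \<Longrightarrow>
    e \<in> set (ck_findpairs s v w) \<Longrightarrow>
    e = (v, w) \<or> (\<exists>P. refined_pair s ST P (fst e) (snd e)) \<or> (\<exists>P. refined_pair s ST P (snd e) (fst e))"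
proof (induction v w arbitrary: Pv Pw e rule: ck_findpairs_induct[of s])
  case (well_sep v w)
  then show ?case by (simp add: ck_findpairs_well_sep)
next
  case (leaf_right v w)
  then show ?case by (simp add: ck_findpairs_leaf_right)
next
  case (split_right v w)
  from split_right.prems(9) obtain c where c: "c \<in> set (children w)" "e \<in> set (ck_findpairs s v c)"
    by (auto simp: ck_findpairs_split_right[OF split_right.hyps(1-3)])
  have "c \<in> ST" "Lmax (pts c) \<le> Lmax (pts Pv)"
    using closed[OF split_right.prems(2) c(1)] Lmax_child_le[OF c(1)] split_right.prems(5) by auto
  then have "e = (v, c) \<or> (\<exists>P. refined_pair s ST P (fst e) (snd e)) \<or> (\<exists>P. refined_pair s ST P (snd e) (fst e))"
    using split_right.IH[OF c(1) split_right.prems(1) _ split_right.prems(3,4) _ split_right.prems(2) c(1)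
        split_right.hyps(2) c(2)] by blast
  moreover have "refined_pair s ST w v c"
    unfolding refined_pair_def using split_right.hyps(1,2) split_right.prems(2-5) c(1) by blast
  ultimately show ?case by auto
next
  case (split_left v w)
  from split_left.prems(9) obtain c where c: "c \<in> set (children v)" "e \<in> set (ck_findpairs s c w)"
    by (auto simp: ck_findpairs_split_left[OF split_left.hyps(1-3)])
  have "c \<in> ST" "Lmax (pts c) \<le> Lmax (pts Pw)"
    using closed[OF split_left.prems(1) c(1)] Lmax_child_le[OF c(1)] split_left.prems(8) by auto
  then have "e = (c, w) \<or> (\<exists>P. refined_pair s ST P (fst e) (snd e)) \<or> (\<exists>P. refined_pair s ST P (snd e) (fst e))"
    using split_left.IH[OF c(1) _ split_left.prems(2) split_left.prems(1) c(1) _ split_left.prems(6,7) _ c(2)]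
      split_left.hyps(2) by fastforce
  moreover have "refined_pair s ST v w c"
    unfolding refined_pair_def
    using split_left.hyps(1,2) split_left.prems(1,6-8) c(1) by (auto simp: well_sep_commute)
  ultimately show ?case by auto
qed

lemma ck_wspd_refined:
  fixes T :: "(real^'d) stree"
  assumes "T' \<in> set (subtrees T)" "e \<in> set (ck_wspd s T')"
  shows "(\<exists>l r. SNode l r \<in> set (subtrees T) \<and> e = (l, r)) \<or>
    (\<exists>P. refined_pair s (set (subtrees T)) P (fst e) (snd e)) \<or>
    (\<exists>P. refined_pair s (set (subtrees T)) P (snd e) (fst e))"
  using assms
proof (induction T')
  case (SLeaf x)
  then show ?case by simp
next
  case (SNode l r)
  let ?ST = "set (subtrees T)"
  have lr: "l \<in> set (children (SNode l r))" "r \<in> set (children (SNode l r))"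
    by simp_all
  have "l \<in> ?ST" "r \<in> ?ST"
    using children_subtree[OF lr(1) SNode.prems(1)] children_subtree[OF lr(2) SNode.prems(1)] .
  from SNode.prems(2) consider "e \<in> set (ck_wspd s l)" | "e \<in> set (ck_wspd s r)" | "e \<in> set (ck_findpairs s l r)"
    by auto
  then show ?case
  proof cases
    case 3
    have "e = (l, r) \<or> (\<exists>P. refined_pair s ?ST P (fst e) (snd e)) \<or> (\<exists>P. refined_pair s ?ST P (snd e) (fst e))"
      by (rule ck_findpairs_refined[OF _ \<open>l \<in> ?ST\<close> \<open>r \<in> ?ST\<close> SNode.prems(1) lr(1) Lmax_child_le[OF lr(2)]
            SNode.prems(1) lr(2) Lmax_child_le[OF lr(1)] 3])
        (use children_subtree in blast)
    then show ?thesis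
      using SNode.prems(1) by blast
  qed (use SNode.IH \<open>l \<in> ?ST\<close> \<open>r \<in> ?ST\<close> in blast)+
qed

section \<open>Packing bounds\<close>

lemma grid_point_inside:
  fixes h :: real
  assumes "0 < h" "lo \<le> x" "x \<le> hi" "2 * h \<le> hi - lo"
  defines "g \<equiv> \<lfloor>min x (hi - 2 * h) / h\<rfloor> + 1"
  shows "lo < of_int g * h \<and> of_int g * h < hi \<and> x - 2 * h < of_int g * h \<and> of_int g * h \<le> x + h"
proof -
  define t where "t = min x (hi - 2 * h)"
  have "t / h < of_int g" "of_int g \<le> t / h + 1"
    unfolding g_def t_def by linarith+
  then have "t < of_int g * h" "of_int g * h \<le> t + h"
    using assms(1) by (simp_all add: field_simps)
  moreover have "lo \<le> t" "t \<le> x" "x - 2 * h \<le> t" "t \<le> hi - 2 * h"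
    unfolding t_def using assms(1-4) by auto
  ultimately show ?thesis
    using assms(1) by argo
qed

text \<open>Each box contains a point of the grid \<open>(\<delta>/2)\<int>\<^sup>d\<close> in its interior, and disjoint interiors
  make this choice injective; all chosen grid points lie in a cube of \<open>4c + 5\<close> grid points
  per side around \<open>z\<close>.\<close>

lemma card_le_if_disjoint_boxes:
  fixes a b x :: "'i \<Rightarrow> real^'d" and z :: "real^'d"
  assumes \<delta>: "0 < \<delta>" and c: "0 \<le> c"
    and side: "\<And>j k. j \<in> A \<Longrightarrow> \<delta> \<le> b j $ k - a j $ k"
    and mem: "\<And>j. j \<in> A \<Longrightarrow> x j \<in> cbox (a j) (b j)"
    and near: "\<And>j k. j \<in> A \<Longrightarrow> \<bar>x j $ k - z $ k\<bar> \<le> c * \<delta>"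
    and disj: "disjoint_family_on (\<lambda>j. box (a j) (b j)) A"
  shows "finite A \<and> real (card A) \<le> (4 * c + 5) ^ CARD('d)"
proof -
  define h where "h = \<delta> / 2"
  have h: "0 < h" "\<delta> = 2 * h"
    using \<delta> by (simp_all add: h_def)
  define g where "g j k = \<lfloor>min (x j $ k) (b j $ k - 2 * h) / h\<rfloor> + 1" for j k
  have g_inside: "a j $ k < of_int (g j k) * h \<and> of_int (g j k) * h < b j $ k
      \<and> x j $ k - \<delta> < of_int (g j k) * h \<and> of_int (g j k) * h \<le> x j $ k + h"
    if "j \<in> A" for j k
    using grid_point_inside[OF h(1), of "a j $ k" "x j $ k" "b j $ k"] mem[OF that] side[OF that]
    unfolding g_def h(2) by (simp add: mem_box_cart)
  have inj: "inj_on g A"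
  proof (rule inj_onI)
    fix i j
    assume ij: "i \<in> A" "j \<in> A" "g i = g j"
    have "(\<chi> k. of_int (g i k) * h) \<in> box (a i) (b i) \<inter> box (a j) (b j)"
      using g_inside[OF ij(1)] g_inside[OF ij(2)] ij(3) by (simp add: mem_box_cart)
    then show "i = j"
      using disj ij(1,2) unfolding disjoint_family_on_def by blast
  qed
  define S where "S k = {\<lceil>(z $ k - c * \<delta> - \<delta>) / h\<rceil> .. \<lfloor>(z $ k + c * \<delta> + h) / h\<rfloor>}" for k
  have g_range: "g ` A \<subseteq> Pi\<^sub>E UNIV S"
  proof
    fix f
    assume "f \<in> g ` A"
    then obtain j where j: "j \<in> A" "f = g j" by blast
    have "g j k \<in> S k" for k
    proof -
      have "z $ k - c * \<delta> - \<delta> \<le> of_int (g j k) * h" "of_int (g j k) * h \<le> z $ k + c * \<delta> + h"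
        using near[OF j(1), of k] g_inside[OF j(1), of k] by (auto simp: abs_le_iff)
      then show ?thesis
        unfolding S_def using h by (simp add: ceiling_le_iff le_floor_iff field_simps)
    qed
    then show "f \<in> Pi\<^sub>E UNIV S"
      using j(2) by (simp add: PiE_UNIV_domain)
  qed
  have fin: "finite (Pi\<^sub>E UNIV S)"
    by (rule finite_PiE) (auto simp: S_def)
  have card_S: "real (card (S k)) \<le> 4 * c + 5" for k
  proof -
    define lo hi where "lo = (z $ k - c * \<delta> - \<delta>) / h" and "hi = (z $ k + c * \<delta> + h) / h"
    have "hi - lo = 4 * c + 3"
      using h by (simp add: lo_def hi_def field_simps)
    then have "of_int \<lfloor>hi\<rfloor> - of_int \<lceil>lo\<rceil> + 1 \<le> 4 * c + 4"
      using of_int_floor_le[of hi] le_of_int_ceiling[of lo] by linarith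
    then show ?thesis
      using c unfolding S_def lo_def[symmetric] hi_def[symmetric] by simp
  qed
  have "card A \<le> card (Pi\<^sub>E UNIV S)"
    using card_inj_on_le[OF inj g_range fin] .
  then have "real (card A) \<le> (\<Prod>k\<in>UNIV. real (card (S k)))"
    by (simp add: card_PiE flip: of_nat_prod)
  also have "\<dots> \<le> (4 * c + 5) ^ CARD('d)"
    by (rule prod_le_power) (use card_S c in auto)
  finally show ?thesis
    using finite_imageD[OF finite_subset[OF g_range fin] inj] by blast
qed

lemma cball_subset_cball_towards:
  fixes p z :: "real^'d"
  assumes e: "0 < e" "e \<le> r" and t: "0 \<le> t" and d: "dist p z \<le> r + t"
  shows "\<exists>c. cball c e \<subseteq> cball p r \<and> dist c z \<le> t + e"
proof (cases "dist p z \<le> r - e")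
  case True
  then show ?thesis
    using e t by (intro exI[of _ z]) (simp add: cball_subset_cball_iff dist_commute)
next
  case False
  define D where "D = dist p z"
  have D: "0 < D" "r - e < D"
    using False e unfolding D_def by auto
  define a where "a = (r - e) / D"
  have a: "0 \<le> a" "a < 1"
    using D e unfolding a_def by (auto simp: field_simps)
  have aD: "a * D = r - e"
    using D unfolding a_def by simp
  define c where "c = p + a *\<^sub>R (z - p)"
  have "dist p c = a * D"
    using a unfolding c_def D_def by (simp add: dist_norm norm_minus_commute)
  then have "dist c p + e \<le> r"
    using aD by (simp add: dist_commute)
  moreover have "dist c z = D - (r - e)"
  proof -
    have "z - c = (1 - a) *\<^sub>R (z - p)"
      unfolding c_def by (simp add: algebra_simps)
    then have "norm (z - c) = (1 - a) * norm (z - p)"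
      using a by simp
    then have "dist c z = (1 - a) * D"
      unfolding D_def by (simp add: dist_norm norm_minus_commute)
    then show ?thesis
      using aD by (simp add: left_diff_distrib)
  qed
  then have "dist c z \<le> t + e"
    using d unfolding D_def by linarith
  ultimately show ?thesis
    by (auto simp: cball_subset_cball_iff)
qed

text \<open>Each ball contains a ball of radius \<open>e\<close> centred within \<open>(K + 1) e\<close> of \<open>z\<close>, which in turn
  contains a cube of half side \<open>e / sqrt d\<close>.\<close>

lemma card_le_if_disjoint_cballs:
  fixes A :: "(real^'d) set" and rad :: "real^'d \<Rightarrow> real" and z :: "real^'d"
  assumes e: "0 < e" and K: "0 \<le> K"
    and disj: "disjoint_family_on (\<lambda>p. cball p (rad p)) A"
    and big: "\<And>p. p \<in> A \<Longrightarrow> e \<le> rad p"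
    and near: "\<And>p. p \<in> A \<Longrightarrow> dist p z \<le> rad p + K * e"
  shows "finite A \<and> real (card A) \<le> (2 * (K + 1) * sqrt (real CARD('d)) + 5) ^ CARD('d)"
proof -
  obtain C where C: "\<And>p. p \<in> A \<Longrightarrow> cball (C p) e \<subseteq> cball p (rad p) \<and> dist (C p) z \<le> K * e + e"
    using cball_subset_cball_towards[OF e big _ near] K e by (metis mult_nonneg_nonneg less_imp_le)
  define sd where "sd = sqrt (real CARD('d))"
  have sd: "0 < sd"
    unfolding sd_def by simp
  define w where "w = e / sd"
  have w: "0 < w" "sd * w = e"
    using e sd unfolding w_def by simp_all
  define cube where "cube p = box (C p - (\<chi> k. w)) (C p + (\<chi> k. w))" for p
  have cube_subset: "cube p \<subseteq> cball p (rad p)" if "p \<in> A" for p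
  proof
    fix v
    assume "v \<in> cube p"
    then have v: "C p $ k - w < v $ k \<and> v $ k < C p $ k + w" for k
      unfolding cube_def by (simp add: mem_box_cart)
    have "\<bar>(v - C p) $ k\<bar> \<le> w" for k
      using v[of k] by (simp add: abs_le_iff)
    then have "dist (C p) v \<le> e"
      using norm_le_sqrt_card_mult[of "v - C p" w] w unfolding sd_def by (simp add: dist_norm norm_minus_commute)
    then show "v \<in> cball p (rad p)"
      using C[OF that] by auto
  qed
  have "finite A \<and> real (card A) \<le> (4 * ((K + 1) * sd / 2) + 5) ^ CARD('d)"
  proof (rule card_le_if_disjoint_boxes[where a = "\<lambda>p. C p - (\<chi> k. w)" and b = "\<lambda>p. C p + (\<chi> k. w)"
        and x = C and z = z])
    show "0 < 2 * w" "0 \<le> (K + 1) * sd / 2"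
      using w sd K by simp_all
    show "\<And>p k. p \<in> A \<Longrightarrow> 2 * w \<le> (C p + (\<chi> k. w)) $ k - (C p - (\<chi> k. w)) $ k"
      "\<And>p. p \<in> A \<Longrightarrow> C p \<in> cbox (C p - (\<chi> k. w)) (C p + (\<chi> k. w))"
      using w by (auto simp: mem_box_cart)
    show "\<bar>C p $ k - z $ k\<bar> \<le> (K + 1) * sd / 2 * (2 * w)" if "p \<in> A" for p k
    proof -
      have "\<bar>C p $ k - z $ k\<bar> \<le> dist (C p) z"
        using component_le_norm_cart[of "C p - z" k] by (simp add: dist_norm)
      also have "\<dots> \<le> (K + 1) * e"
        using C[OF that] by (simp add: algebra_simps)
      also have "\<dots> = (K + 1) * sd / 2 * (2 * w)"
        by (simp add: w(2)[symmetric])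
      finally show ?thesis .
    qed
    show "disjoint_family_on (\<lambda>p. box (C p - (\<chi> k. w)) (C p + (\<chi> k. w))) A"
      using disj cube_subset unfolding disjoint_family_on_def cube_def by blast
  qed
  moreover have "4 * ((K + 1) * sd / 2) + 5 = 2 * (K + 1) * sqrt (real CARD('d)) + 5"
    unfolding sd_def by simp
  ultimately show ?thesis
    by (simp only:)
qed

section \<open>Cells of a split tree\<close>

definition cell :: "(real^'d) \<times> (real^'d) \<Rightarrow> (real^'d) set" where
  "cell Q = cbox (fst Q) (snd Q)"

definition sides_ge :: "(real^'d) \<times> (real^'d) \<Rightarrow> real \<Rightarrow> bool" where
  "sides_ge Q a \<longleftrightarrow> (\<forall>k. a \<le> snd Q $ k - fst Q $ k)"

lemma sides_ge_mono: "sides_ge Q a \<Longrightarrow> b \<le> a \<Longrightarrow> sides_ge Q b"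
  unfolding sides_ge_def using order_trans by blast

lemma interior_cell: "interior (cell Q) = box (fst Q) (snd Q)"
  by (simp add: cell_def interior_cbox)

lemma box_halves:
  fixes a b :: "real^'d"
  assumes "a $ i \<le> m" "m \<le> b $ i"
  defines "b' \<equiv> \<chi> k. if k = i then m else b $ k" and "a' \<equiv> \<chi> k. if k = i then m else a $ k"
  shows "box a b' \<subseteq> box a b" and "box a' b \<subseteq> box a b" and "box a b' \<inter> box a' b = {}"
    and "\<And>p. p \<in> cbox a b \<Longrightarrow> p $ i \<le> m \<Longrightarrow> p \<in> cbox a b'"
    and "\<And>p. p \<in> cbox a b \<Longrightarrow> m \<le> p $ i \<Longrightarrow> p \<in> cbox a' b"
proof -
  show "box a b' \<subseteq> box a b"
  proof
    fix x
    assume "x \<in> box a b'"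
    then have "a $ k < x $ k \<and> x $ k < b' $ k" for k
      by (simp add: mem_box_cart)
    moreover have "b' $ k \<le> b $ k" for k
      using assms(2) by (simp add: b'_def)
    ultimately show "x \<in> box a b"
      by (auto simp: mem_box_cart intro: less_le_trans)
  qed
  show "box a' b \<subseteq> box a b"
  proof
    fix x
    assume "x \<in> box a' b"
    then have "a' $ k < x $ k \<and> x $ k < b $ k" for k
      by (simp add: mem_box_cart)
    moreover have "a $ k \<le> a' $ k" for k
      using assms(1) by (simp add: a'_def)
    ultimately show "x \<in> box a b"
      by (auto simp: mem_box_cart intro: le_less_trans)
  qed
  have "x $ i < m" if "x \<in> box a b'" for x
    using spec[OF that[unfolded mem_box_cart], of i] by (simp add: b'_def)
  moreover have "m < x $ i" if "x \<in> box a' b" for x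
    using spec[OF that[unfolded mem_box_cart], of i] by (simp add: a'_def)
  ultimately show "box a b' \<inter> box a' b = {}"
    by fastforce
  show "p \<in> cbox a b'" if "p \<in> cbox a b" "p $ i \<le> m" for p
    using that by (simp add: mem_box_cart b'_def)
  show "p \<in> cbox a' b" if "p \<in> cbox a b" "m \<le> p $ i" for p
    using that by (simp add: mem_box_cart a'_def)
qed

text \<open>Both halves keep sides of length at least \<open>L / 2\<close> because the cut passes through the
  middle of a longest side of the bounding box, which lies inside the cell.\<close>

lemma split_cell:
  fixes l r :: "(real^'d) stree"
  defines "L \<equiv> Lmax (pts (SNode l r))"
  assumes split: "split_tree (SNode l r)" and mem: "pts (SNode l r) \<subseteq> cell Q"
    and side: "sides_ge Q (L / 2)"
  obtains Ql Qr where "pts l \<subseteq> cell Ql" "pts r \<subseteq> cell Qr"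
    "sides_ge Ql (L / 2)" "sides_ge Qr (L / 2)"
    "interior (cell Ql) \<subseteq> interior (cell Q)" "interior (cell Qr) \<subseteq> interior (cell Q)"
    "interior (cell Ql) \<inter> interior (cell Qr) = {}"
proof -
  let ?S = "pts (SNode l r)"
  obtain a b where Q: "Q = (a, b)"
    by (cases Q)
  have mem: "?S \<subseteq> cbox a b" and side: "sides_ge (a, b) (L / 2)"
    using mem side unfolding Q cell_def by simp_all
  obtain i where iL: "bb_hi ?S i - bb_lo ?S i = L"
    and cut: "(\<forall>p\<in>pts l. p $ i \<le> (bb_lo ?S i + bb_hi ?S i) / 2) \<and> (\<forall>p\<in>pts r. (bb_lo ?S i + bb_hi ?S i) / 2 \<le> p $ i) \<or>
      (\<forall>p\<in>pts r. p $ i \<le> (bb_lo ?S i + bb_hi ?S i) / 2) \<and> (\<forall>p\<in>pts l. (bb_lo ?S i + bb_hi ?S i) / 2 \<le> p $ i)"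
    using split unfolding L_def by (auto simp: Let_def)
  define m where "m = (bb_lo ?S i + bb_hi ?S i) / 2"
  obtain plo phi where plo: "plo \<in> ?S" "plo $ i = bb_lo ?S i" and phi: "phi \<in> ?S" "phi $ i = bb_hi ?S i"
    using bb_lo_attained[of ?S i] bb_hi_attained[of ?S i] by auto
  have "plo \<in> cbox a b" "phi \<in> cbox a b"
    using mem plo(1) phi(1) by blast+
  then have "a $ i \<le> plo $ i" "phi $ i \<le> b $ i"
    unfolding mem_box_cart by blast+
  then have "a $ i \<le> bb_lo ?S i" "bb_hi ?S i \<le> b $ i"
    using plo(2) phi(2) by simp_all
  then have m: "a $ i + L / 2 \<le> m" "m + L / 2 \<le> b $ i"
    using iL unfolding m_def by argo+
  define lower where "lower = (a, \<chi> k. if k = i then m else b $ k)"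
  define upper where "upper = ((\<chi> k. if k = i then m else a $ k), b)"
  have sides: "sides_ge lower (L / 2)" "sides_ge upper (L / 2)"
    using side m unfolding sides_ge_def lower_def upper_def by auto
  have "a $ i \<le> m" "m \<le> b $ i"
    using m L_def Lmax_nonneg[of ?S] by auto
  note halves = box_halves[OF this]
  have lower_cell: "pts u \<subseteq> cbox (fst lower) (snd lower)" if "pts u \<subseteq> ?S" "\<forall>p\<in>pts u. p $ i \<le> m" for u
    using that mem halves(4) unfolding lower_def fst_conv snd_conv by blast
  have upper_cell: "pts u \<subseteq> cbox (fst upper) (snd upper)" if "pts u \<subseteq> ?S" "\<forall>p\<in>pts u. m \<le> p $ i" for u
    using that mem halves(5) unfolding upper_def fst_conv snd_conv by blast
  have boxes: "box (fst lower) (snd lower) \<subseteq> box a b" "box (fst upper) (snd upper) \<subseteq> box a b"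
    "box (fst lower) (snd lower) \<inter> box (fst upper) (snd upper) = {}"
    using halves(1-3) by (simp_all add: lower_def upper_def)
  from cut[folded m_def] show ?thesis
  proof
    assume "(\<forall>p\<in>pts l. p $ i \<le> m) \<and> (\<forall>p\<in>pts r. m \<le> p $ i)"
    then show ?thesis
      using that[of lower upper] lower_cell upper_cell boxes sides by (auto simp: cell_def Q)
  next
    assume "(\<forall>p\<in>pts r. p $ i \<le> m) \<and> (\<forall>p\<in>pts l. m \<le> p $ i)"
    then show ?thesis
      using that[of upper lower] lower_cell upper_cell boxes sides by (auto simp: cell_def Q Int_commute)
  qed
qed

definition cell_system ::
  "(real^'d) stree \<Rightarrow> (real^'d) \<times> (real^'d) \<Rightarrow> ((real^'d) stree \<Rightarrow> (real^'d) \<times> (real^'d)) \<Rightarrow> bool"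
where
  "cell_system T Q f \<longleftrightarrow> f T = Q \<and>
    (\<forall>x\<in>set (subtrees T). pts x \<subseteq> cell (f x) \<and> interior (cell (f x)) \<subseteq> interior (cell Q)) \<and>
    (\<forall>P\<in>set (subtrees T). \<forall>x\<in>set (children P). sides_ge (f x) (Lmax (pts P) / 2)) \<and>
    (\<forall>x\<in>set (subtrees T). \<forall>y\<in>set (subtrees T).
       pts x \<inter> pts y = {} \<longrightarrow> interior (cell (f x)) \<inter> interior (cell (f y)) = {})"

lemma cell_system_SNode:
  fixes l r :: "(real^'d) stree"
  defines "L \<equiv> Lmax (pts (SNode l r))"
  assumes dT: "distinct (leaves (SNode l r))" and fl: "cell_system l Ql fl" and fr: "cell_system r Qr fr"
    and Q: "pts (SNode l r) \<subseteq> cell Q" "sides_ge Ql (L / 2)" "sides_ge Qr (L / 2)"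
      "interior (cell Ql) \<subseteq> interior (cell Q)" "interior (cell Qr) \<subseteq> interior (cell Q)"
      "interior (cell Ql) \<inter> interior (cell Qr) = {}"
  shows "cell_system (SNode l r) Q (\<lambda>x. if x = SNode l r then Q else if x \<in> set (subtrees l) then fl x else fr x)"
proof -
  let ?T = "SNode l r"
  define f where "f x = (if x = ?T then Q else if x \<in> set (subtrees l) then fl x else fr x)" for x
  note dis = subtrees_SNode_disjoint[OF dT]
  have fl: "fl l = Ql" "\<forall>x\<in>set (subtrees l). pts x \<subseteq> cell (fl x) \<and> interior (cell (fl x)) \<subseteq> interior (cell Ql)"
    "\<forall>P\<in>set (subtrees l). \<forall>x\<in>set (children P). sides_ge (fl x) (Lmax (pts P) / 2)"
    "\<forall>x\<in>set (subtrees l). \<forall>y\<in>set (subtrees l).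
       pts x \<inter> pts y = {} \<longrightarrow> interior (cell (fl x)) \<inter> interior (cell (fl y)) = {}"
    using fl unfolding cell_system_def by simp_all
  have fr: "fr r = Qr" "\<forall>x\<in>set (subtrees r). pts x \<subseteq> cell (fr x) \<and> interior (cell (fr x)) \<subseteq> interior (cell Qr)"
    "\<forall>P\<in>set (subtrees r). \<forall>x\<in>set (children P). sides_ge (fr x) (Lmax (pts P) / 2)"
    "\<forall>x\<in>set (subtrees r). \<forall>y\<in>set (subtrees r).
       pts x \<inter> pts y = {} \<longrightarrow> interior (cell (fr x)) \<inter> interior (cell (fr y)) = {}"
    using fr unfolding cell_system_def by simp_all
  have fl_eq: "f x = fl x" if "x \<in> set (subtrees l)" for x
    using that dis by (auto simp: f_def)
  have fr_eq: "f x = fr x" if "x \<in> set (subtrees r)" for x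
    using that dis by (auto simp: f_def)
  have f_cells: "pts x \<subseteq> cell (f x) \<and> interior (cell (f x)) \<subseteq> interior (cell Q)" if x: "x \<in> set (subtrees ?T)" for x
  proof -
    consider "x = ?T" | "x \<in> set (subtrees l)" | "x \<in> set (subtrees r)"
      using x by auto
    then show ?thesis
    proof cases
      case 1
      then show ?thesis using Q(1) by (simp add: f_def)
    next
      case 2
      then show ?thesis using fl(2) fl_eq Q(4) by fastforce
    next
      case 3
      then show ?thesis using fr(2) fr_eq Q(5) by fastforce
    qed
  qed
  have f_sides: "sides_ge (f x) (Lmax (pts P) / 2)" if P: "P \<in> set (subtrees ?T)" and x: "x \<in> set (children P)" for P x
  proof -
    consider "P = ?T" | "P \<in> set (subtrees l)" | "P \<in> set (subtrees r)"
      using P by auto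
    then show ?thesis
    proof cases
      case 1
      then show ?thesis
        using x Q(2,3) fl(1) fr(1) fl_eq[of l] fr_eq[of r] by (auto simp: subtree_self L_def)
    next
      case 2
      then show ?thesis
        using x fl(3) fl_eq[OF children_subtree[OF x 2]] by simp
    next
      case 3
      then show ?thesis
        using x fr(3) fr_eq[OF children_subtree[OF x 3]] by simp
    qed
  qed
  have f_disjoint: "interior (cell (f x)) \<inter> interior (cell (f y)) = {}"
    if xy: "x \<in> set (subtrees ?T)" "y \<in> set (subtrees ?T)" and disj: "pts x \<inter> pts y = {}" for x y
  proof -
    have "x \<noteq> ?T"
    proof
      assume "x = ?T"
      then show False
        using pts_subtree_subset[OF xy(2)] disj pts_not_empty[of y] by blast
    qed
    moreover have "y \<noteq> ?T"
    proof
      assume "y = ?T"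
      then show False
        using pts_subtree_subset[OF xy(1)] disj pts_not_empty[of x] by blast
    qed
    ultimately consider "x \<in> set (subtrees l)" "y \<in> set (subtrees l)" | "x \<in> set (subtrees r)" "y \<in> set (subtrees r)"
      | "x \<in> set (subtrees l)" "y \<in> set (subtrees r)" | "x \<in> set (subtrees r)" "y \<in> set (subtrees l)"
      using xy by auto
    then show ?thesis
    proof cases
      case 1
      then show ?thesis using fl(4) fl_eq disj by simp
    next
      case 2
      then show ?thesis using fr(4) fr_eq disj by simp
    next
      case 3
      then have "interior (cell (f x)) \<subseteq> interior (cell Ql)" "interior (cell (f y)) \<subseteq> interior (cell Qr)"
        using fl(2) fr(2) fl_eq fr_eq by simp_all
      then show ?thesis using Q(6) by blast
    next
      case 4
      then have "interior (cell (f x)) \<subseteq> interior (cell Qr)" "interior (cell (f y)) \<subseteq> interior (cell Ql)"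
        using fl(2) fr(2) fl_eq fr_eq by simp_all
      then show ?thesis using Q(6) by blast
    qed
  qed
  show ?thesis
    unfolding cell_system_def f_def[symmetric] using f_cells f_sides f_disjoint by (simp add: f_def)
qed

lemma split_tree_cells:
  fixes T :: "(real^'d) stree"
  assumes "distinct (leaves T)" "split_tree T" "pts T \<subseteq> cell Q" "sides_ge Q (Lmax (pts T) / 2)"
  shows "\<exists>f. cell_system T Q f"
  using assms
proof (induction T arbitrary: Q)
  case (SLeaf p)
  then show ?case
    by (intro exI[of _ "\<lambda>_. Q"]) (auto simp: cell_system_def)
next
  case (SNode l r)
  let ?T = "SNode l r" and ?L = "Lmax (pts (SNode l r))"
  obtain Ql Qr where Q: "pts l \<subseteq> cell Ql" "pts r \<subseteq> cell Qr" "sides_ge Ql (?L / 2)" "sides_ge Qr (?L / 2)"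
    "interior (cell Ql) \<subseteq> interior (cell Q)" "interior (cell Qr) \<subseteq> interior (cell Q)"
    "interior (cell Ql) \<inter> interior (cell Qr) = {}"
    using split_cell[OF SNode.prems(2,3,4)] by blast
  have "sides_ge Ql (Lmax (pts l) / 2)" "sides_ge Qr (Lmax (pts r) / 2)"
    using sides_ge_mono[OF Q(3), of "Lmax (pts l) / 2"] sides_ge_mono[OF Q(4), of "Lmax (pts r) / 2"]
      Lmax_child_le[of l ?T] Lmax_child_le[of r ?T] by simp_all
  then obtain fl fr where "cell_system l Ql fl" "cell_system r Qr fr"
    using SNode.IH(1)[of Ql] SNode.IH(2)[of Qr] Q(1,2) SNode.prems(1,2) by auto
  then show ?case
    using cell_system_SNode[OF SNode.prems(1) _ _ SNode.prems(3) Q(3-7)] by blast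
qed

lemma split_tree_has_cells:
  fixes T :: "(real^'d) stree"
  assumes dT: "distinct (leaves T)" and split: "split_tree T"
  obtains f where "\<And>x. x \<in> set (subtrees T) \<Longrightarrow> pts x \<subseteq> cell (f x)"
    and "\<And>P x. P \<in> set (subtrees T) \<Longrightarrow> x \<in> set (children P) \<Longrightarrow> sides_ge (f x) (Lmax (pts P) / 2)"
    and "\<And>x x'. x \<in> set (subtrees T) \<Longrightarrow> x' \<in> set (subtrees T) \<Longrightarrow> pts x \<inter> pts x' = {} \<Longrightarrow>
      interior (cell (f x)) \<inter> interior (cell (f x')) = {}"
proof -
  define Q where "Q = ((\<chi> k. bb_lo (pts T) k), (\<chi> k. bb_lo (pts T) k + Lmax (pts T)))"
  have "pts T \<subseteq> cell Q"
  proof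
    fix p
    assume "p \<in> pts T"
    then have "bb_lo (pts T) k \<le> p $ k \<and> p $ k \<le> bb_lo (pts T) k + Lmax (pts T)" for k
      using bb_lo_le[of "pts T" p k] bb_hi_ge[of "pts T" p k] side_le_Lmax[of "pts T" k] by simp
    then show "p \<in> cell Q"
      unfolding Q_def cell_def by (simp add: mem_box_cart)
  qed
  moreover have "sides_ge Q (Lmax (pts T) / 2)"
    unfolding sides_ge_def Q_def using Lmax_nonneg[of "pts T"] by simp
  ultimately obtain f where "cell_system T Q f"
    using split_tree_cells[OF dT split] by blast
  then show ?thesis
    using that unfolding cell_system_def by blast
qed

section \<open>Size of the decomposition\<close>

lemma refined_pair_near:
  assumes "refined_pair s ST P x y" "p \<in> pts x"
  shows "dist p (bb_center (pts P)) \<le> (s + 3) * encl_rad (pts P)"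
proof -
  have not_sep: "\<not> well_sep s (pts x) (pts P)" and "Lmax (pts x) \<le> Lmax (pts P)"
    using assms(1) unfolding refined_pair_def by auto
  then have smaller: "encl_rad (pts x) \<le> encl_rad (pts P)"
    unfolding encl_rad_def by (simp add: mult_left_mono)
  then have "dist (bb_center (pts x)) (bb_center (pts P)) < (s + 2) * encl_rad (pts P)"
    using not_sep unfolding well_sep_def Let_def by (simp add: max_def algebra_simps)
  moreover have "dist p (bb_center (pts x)) \<le> encl_rad (pts x)"
    by (rule dist_bb_center_mem[OF finite_pts assms(2)])
  ultimately show ?thesis
    using dist_triangle[of p "bb_center (pts P)" "bb_center (pts x)"] smaller by (simp add: algebra_simps)
qed

text \<open>For fixed \<open>P\<close> and \<open>y\<close>, the partners \<open>x\<close> of refined pairs have disjoint cells with sides at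
  least \<open>Lmax P / 2\<close>, because their parents are no smaller than \<open>P\<close>.\<close>

lemma card_refined_pairs_le:
  fixes T :: "(real^'d) stree"
  assumes s: "0 \<le> s" and dT: "distinct (leaves T)" and split: "split_tree T"
    and refined: "\<And>x. x \<in> X \<Longrightarrow> refined_pair s (set (subtrees T)) P x y"
    and disj: "\<And>x1 x2. x1 \<in> X \<Longrightarrow> x2 \<in> X \<Longrightarrow> x1 \<noteq> x2 \<Longrightarrow> pts x1 \<inter> pts x2 = {}"
  shows "finite X \<and> real (card X) \<le> (4 * (s + 3) * sqrt (real CARD('d)) + 5) ^ CARD('d)"
proof (cases "X = {}")
  case True
  then show ?thesis using s by simp
next
  case False
  let ?ST = "set (subtrees T)"
  obtain x0 where "x0 \<in> X"
    using False by blast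
  then have "P \<in> ?ST" "y \<in> set (children P)"
    using refined unfolding refined_pair_def by auto
  moreover obtain Pl Pr where "P = SNode Pl Pr"
    using \<open>y \<in> set (children P)\<close> by (cases P) auto
  ultimately have "0 < Lmax (pts P)"
    using Lmax_SNode_pos distinct_leaves_subtree[OF dT] by blast
  define \<delta> where "\<delta> = Lmax (pts P) / 2"
  define sd where "sd = sqrt (real CARD('d))"
  obtain f where f_cells: "\<And>x. x \<in> ?ST \<Longrightarrow> pts x \<subseteq> cell (f x)"
    and f_sides: "\<And>Px x. Px \<in> ?ST \<Longrightarrow> x \<in> set (children Px) \<Longrightarrow> sides_ge (f x) (Lmax (pts Px) / 2)"
    and f_disj: "\<And>x x'. x \<in> ?ST \<Longrightarrow> x' \<in> ?ST \<Longrightarrow> pts x \<inter> pts x' = {} \<Longrightarrow>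
      interior (cell (f x)) \<inter> interior (cell (f x')) = {}"
    using split_tree_has_cells[OF dT split] by blast
  define rep where "rep x = (SOME p. p \<in> pts x)" for x :: "(real^'d) stree"
  have rep: "rep x \<in> pts x" for x
    unfolding rep_def using pts_not_empty[of x] by (simp add: some_in_eq)
  have X: "x \<in> ?ST \<and> sides_ge (f x) \<delta> \<and> dist (rep x) (bb_center (pts P)) \<le> (s + 3) * sd * \<delta>"
    if x: "x \<in> X" for x
  proof -
    obtain Px where Px: "Px \<in> ?ST" "x \<in> set (children Px)" "Lmax (pts P) \<le> Lmax (pts Px)"
      using refined[OF x] unfolding refined_pair_def by blast
    have "sides_ge (f x) \<delta>"
      using sides_ge_mono[OF f_sides[OF Px(1,2)], of \<delta>] Px(3) unfolding \<delta>_def by simp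
    moreover have "encl_rad (pts P) = sd * \<delta>"
      unfolding encl_rad_def sd_def \<delta>_def by simp
    ultimately show ?thesis
      using children_subtree[OF Px(2,1)] refined_pair_near[OF refined[OF x] rep] by (simp add: algebra_simps)
  qed
  have "finite X \<and> real (card X) \<le> (4 * ((s + 3) * sd) + 5) ^ CARD('d)"
  proof (rule card_le_if_disjoint_boxes[where a = "\<lambda>x. fst (f x)" and b = "\<lambda>x. snd (f x)" and x = rep])
    show "0 < \<delta>" "0 \<le> (s + 3) * sd"
      using \<open>0 < Lmax (pts P)\<close> s by (simp_all add: \<delta>_def sd_def)
    show "\<delta> \<le> snd (f x) $ k - fst (f x) $ k" if "x \<in> X" for x k
      using X[OF that] unfolding sides_ge_def by blast
    show "rep x \<in> cbox (fst (f x)) (snd (f x))" if "x \<in> X" for x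
      using X[OF that] f_cells rep unfolding cell_def by blast
    show "\<bar>rep x $ k - bb_center (pts P) $ k\<bar> \<le> (s + 3) * sd * \<delta>" if "x \<in> X" for x k
      using X[OF that] component_le_norm_cart[of "rep x - bb_center (pts P)" k]
      by (simp add: dist_norm)
    show "disjoint_family_on (\<lambda>x. box (fst (f x)) (snd (f x))) X"
      unfolding disjoint_family_on_def using X disj f_disj by (simp add: interior_cell)
  qed
  then show ?thesis
    unfolding sd_def by (simp add: algebra_simps)
qed

definition refined_at ::
  "real \<Rightarrow> (real^'d) stree \<Rightarrow> (real^'d) stree \<Rightarrow> (real^'d) stree \<Rightarrow> ((real^'d) stree \<times> (real^'d) stree) set"
where
  "refined_at s T P y = {e \<in> set (ck_wspd s T).
     snd e = y \<and> refined_pair s (set (subtrees T)) P (fst e) y \<or>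
     fst e = y \<and> refined_pair s (set (subtrees T)) P (snd e) y}"

text \<open>A pair of points is separated by only one pair of the decomposition, so distinct pairs
  with the child \<open>y\<close> have disjoint partners.\<close>

lemma card_refined_at_le:
  fixes T :: "(real^'d) stree"
  assumes s: "0 \<le> s" and dT: "distinct (leaves T)" and split: "split_tree T"
  shows "real (card (refined_at s T P y)) \<le> (4 * (s + 3) * sqrt (real CARD('d)) + 5) ^ CARD('d)"
proof -
  let ?R = "refined_at s T P y"
  define partner where "partner e = (if snd e = y then fst e else snd e)" for e :: "(real^'d) stree \<times> (real^'d) stree"
  have R: "e \<in> set (ck_wspd s T) \<and> refined_pair s (set (subtrees T)) P (partner e) y \<and>
      (\<forall>p\<in>pts (partner e). \<forall>q\<in>pts y. separates e p q)" if "e \<in> ?R" for e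
    using that unfolding refined_at_def partner_def separates_def by auto
  have same: "e1 = e2"
    if e: "e1 \<in> ?R" "e2 \<in> ?R" and meet: "pts (partner e1) \<inter> pts (partner e2) \<noteq> {}" for e1 e2
  proof -
    obtain p q where "p \<in> pts (partner e1)" "p \<in> pts (partner e2)" "q \<in> pts y"
      using meet pts_not_empty[of y] by blast
    then show ?thesis
      using ck_wspd_separates_unique[OF dT, of e1 s e2 p q] R[OF e(1)] R[OF e(2)] by blast
  qed
  have inj: "inj_on partner ?R"
    by (rule inj_onI) (use same pts_not_empty in fastforce)
  have "finite (partner ` ?R) \<and> real (card (partner ` ?R)) \<le> (4 * (s + 3) * sqrt (real CARD('d)) + 5) ^ CARD('d)"
    by (rule card_refined_pairs_le[OF s dT split, of _ P y]) (use R same in blast)+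
  then show ?thesis
    using card_image[OF inj] by simp
qed

lemma card_ck_wspd_le:
  fixes T :: "(real^'d) stree"
  assumes s: "0 \<le> s" and dT: "distinct (leaves T)" and split: "split_tree T"
  shows "real (card (set (ck_wspd s T)))
    \<le> (1 + 2 * (4 * (s + 3) * sqrt (real CARD('d)) + 5) ^ CARD('d)) * real (card (set (subtrees T)))"
proof -
  let ?ST = "set (subtrees T)" and ?L = "set (ck_wspd s T)"
  define K where "K = (4 * (s + 3) * sqrt (real CARD('d)) + 5) ^ CARD('d)"
  have K: "0 \<le> K"
    unfolding K_def using s by simp
  define siblings where "siblings = {(l, r) | l r. SNode l r \<in> ?ST}"
  have "inj_on (\<lambda>(l, r). SNode l r) siblings" and siblings_ST: "(\<lambda>(l, r). SNode l r) ` siblings \<subseteq> ?ST"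
    unfolding siblings_def by (auto simp: inj_on_def)
  then have "finite siblings" and card_siblings: "card siblings \<le> card ?ST"
    using finite_imageD[OF finite_subset[OF siblings_ST]] card_inj_on_le by blast+
  have "?L \<subseteq> siblings \<union> (\<Union>P\<in>?ST. \<Union>y\<in>set (children P). refined_at s T P y)"
  proof
    fix e
    assume e: "e \<in> ?L"
    from ck_wspd_refined[OF subtree_self e] show "e \<in> siblings \<union> (\<Union>P\<in>?ST. \<Union>y\<in>set (children P). refined_at s T P y)"
      unfolding siblings_def refined_at_def refined_pair_def using e by blast
  qed
  then have "card ?L \<le> card (siblings \<union> (\<Union>P\<in>?ST. \<Union>y\<in>set (children P). refined_at s T P y))"
    by (rule card_mono[rotated]) (use \<open>finite siblings\<close> in \<open>auto simp: refined_at_def\<close>)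
  also have "\<dots> \<le> card siblings + (\<Sum>P\<in>?ST. card (\<Union>y\<in>set (children P). refined_at s T P y))"
    by (rule order_trans[OF card_Un_le add_left_mono[OF card_UN_le]]) simp
  also have "\<dots> \<le> card ?ST + (\<Sum>P\<in>?ST. \<Sum>y\<in>set (children P). card (refined_at s T P y))"
  proof (rule add_mono[OF card_siblings])
    show "(\<Sum>P\<in>?ST. card (\<Union>y\<in>set (children P). refined_at s T P y))
        \<le> (\<Sum>P\<in>?ST. \<Sum>y\<in>set (children P). card (refined_at s T P y))"
      by (intro sum_mono card_UN_le) simp
  qed
  finally have "real (card ?L) \<le> real (card ?ST) + (\<Sum>P\<in>?ST. \<Sum>y\<in>set (children P). real (card (refined_at s T P y)))"
    by (simp flip: of_nat_sum)
  also have "\<dots> \<le> real (card ?ST) + (\<Sum>P\<in>?ST. 2 * K)"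
  proof (intro add_left_mono sum_mono)
    fix P
    have "(\<Sum>y\<in>set (children P). real (card (refined_at s T P y))) \<le> real (card (set (children P))) * K"
      using sum_bounded_above[of "set (children P)" "\<lambda>y. real (card (refined_at s T P y))" K]
        card_refined_at_le[OF s dT split] unfolding K_def by simp
    also have "\<dots> \<le> 2 * K"
      using card_children_le[of P] K by (intro mult_right_mono) simp_all
    finally show "(\<Sum>y\<in>set (children P). real (card (refined_at s T P y))) \<le> 2 * K" .
  qed
  finally show ?thesis
    unfolding K_def by (simp add: algebra_simps)
qed

section \<open>Splitting pairs of a point ball and a node\<close>

definition ball_unseparated :: "real \<Rightarrow> (real^'d \<Rightarrow> real) \<Rightarrow> real^'d \<Rightarrow> (real^'d) stree \<Rightarrow> bool" where
  "ball_unseparated s rad p u \<longleftrightarrow>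
     dist p (bb_center (pts u)) - encl_rad (pts u) - rad p < (3 * s + 4) * encl_rad (pts u)"

lemma length_findpairs_ball_le:
  "distinct (leaves w) \<Longrightarrow>
   length (findpairs_ball s rad p w) \<le> 1 + 2 * card {u \<in> set (subtrees w). is_node u \<and> ball_unseparated s rad p u}"
proof (induction w)
  case (SLeaf q)
  then show ?case by (simp add: findpairs_ball.simps)
next
  case (SNode l r)
  let ?T = "SNode l r" and ?U = "\<lambda>w. {u \<in> set (subtrees w). is_node u \<and> ball_unseparated s rad p u}"
  show ?case
  proof (cases "ball_unseparated s rad p ?T")
    case False
    then show ?thesis
      by (simp add: findpairs_ball.simps ball_unseparated_def)
  next
    case True
    then have "findpairs_ball s rad p ?T = findpairs_ball s rad p l @ findpairs_ball s rad p r"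
      by (subst findpairs_ball.simps) (simp add: ball_unseparated_def)
    moreover have "?U ?T = insert ?T (?U l \<union> ?U r)"
      using True by auto
    moreover have "card (insert ?T (?U l \<union> ?U r)) = 1 + card (?U l) + card (?U r)"
    proof -
      note dis = subtrees_SNode_disjoint[OF SNode.prems]
      have "card (?U l \<union> ?U r) = card (?U l) + card (?U r)"
        using dis(1) by (intro card_Un_disjoint) auto
      moreover have "?T \<notin> ?U l \<union> ?U r"
        using dis(2,3) by blast
      ultimately show ?thesis
        by simp
    qed
    ultimately show ?thesis
      using SNode by simp
  qed
qed

fun leaf_point :: "'a stree \<times> 'a stree \<Rightarrow> 'a" where
  "leaf_point (SLeaf p, w) = p"
| "leaf_point (SNode a b, SLeaf q) = q"
| "leaf_point (SNode a b, SNode c d) = undefined"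

text \<open>\<open>charges s rad e u\<close>: the pair \<open>e\<close> of a leaf and a node \<open>w\<close> is split by FindPairs at the
  node \<open>u\<close> below \<open>w\<close>.  Each split produces at most two extra pairs.\<close>

definition charges ::
  "real \<Rightarrow> (real^'d \<Rightarrow> real) \<Rightarrow> (real^'d) stree \<times> (real^'d) stree \<Rightarrow> (real^'d) stree \<Rightarrow> bool"
where
  "charges s rad e u \<longleftrightarrow> (\<exists>w. (e = (SLeaf (leaf_point e), w) \<or> e = (w, SLeaf (leaf_point e))) \<and>
     is_node w \<and> u \<in> set (subtrees w) \<and> is_node u \<and> ball_unseparated s rad (leaf_point e) u)"

lemma length_process_pair_le:
  fixes T :: "(real^'d) stree"
  assumes dT: "distinct (leaves T)" and e: "e \<in> set (ck_wspd s' T)"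
  shows "length (process_pair s rad e) \<le> 1 + 2 * card {u \<in> set (subtrees T). charges s rad e u}"
proof -
  have split: "length (findpairs_ball s rad p w) \<le> 1 + 2 * card {u \<in> set (subtrees T). charges s rad e u}"
    if "w \<in> set (subtrees T)" "is_node w" "e = (SLeaf p, w) \<or> e = (w, SLeaf p)" for p w
  proof -
    have "leaf_point e = p"
      using that(2,3) by (cases w) auto
    then have "{u \<in> set (subtrees w). is_node u \<and> ball_unseparated s rad p u}
        \<subseteq> {u \<in> set (subtrees T). charges s rad e u}"
      using that subtree_trans[OF that(1)] unfolding charges_def by blast
    then have "card {u \<in> set (subtrees w). is_node u \<and> ball_unseparated s rad p u}
        \<le> card {u \<in> set (subtrees T). charges s rad e u}"
      by (rule card_mono[rotated]) simp
    then show ?thesis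
      using length_findpairs_ball_le[OF distinct_leaves_subtree[OF dT that(1)], of s rad p] by linarith
  qed
  obtain v w where vw: "e = (v, w)" "v \<in> set (subtrees T)" "w \<in> set (subtrees T)"
    using ck_wspd_subtrees[OF dT e] by (cases e) auto
  show ?thesis
  proof (cases v)
    case (SLeaf p)
    then show ?thesis
      using split[of w p] vw by (cases w) auto
  next
    case (SNode vl vr)
    then show ?thesis
      using split[of v] vw by (cases w) auto
  qed
qed

text \<open>The centre \<open>p\<close> is far from the node \<open>w\<close> but its ball is not separated from the enclosing
  ball of \<open>u\<close>; so the ball is large compared with \<open>u\<close> and reaches close to it.\<close>

lemma ball_unseparated_large_near:
  fixes p :: "real^'d"
  assumes sep: "well_sep (3 * s + 6) {p} (pts w)" and u: "u \<in> set (subtrees w)"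
    and unsep: "ball_unseparated s rad p u" and s: "0 \<le> s"
  shows "encl_rad (pts u) \<le> rad p \<and> dist p (bb_center (pts u)) \<le> rad p + (3 * s + 5) * encl_rad (pts u)"
proof -
  define eW eU where "eW = encl_rad (pts w)" and "eU = encl_rad (pts u)"
  have sub: "pts u \<subseteq> pts w"
    by (rule pts_subtree_subset[OF u])
  have "0 \<le> eU" "eU \<le> eW"
    unfolding eU_def eW_def using encl_rad_nonneg[of "pts u"] encl_rad_mono[OF _ sub] by simp_all
  have "dist (bb_center (pts u)) (bb_center (pts w)) \<le> eW"
    unfolding eW_def using dist_bb_center_subset[OF finite_pts sub pts_not_empty] .
  moreover have "3 * (s * eW) + 8 * eW \<le> dist p (bb_center (pts w))"
  proof -
    have "max (encl_rad {p}) (encl_rad (pts w)) = eW"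
      using \<open>0 \<le> eU\<close> \<open>eU \<le> eW\<close> unfolding eW_def by simp
    then show ?thesis
      using sep unfolding well_sep_def Let_def by (simp add: algebra_simps)
  qed
  moreover have "s * eU \<le> s * eW"
    using \<open>eU \<le> eW\<close> s by (rule mult_left_mono)
  moreover have "dist p (bb_center (pts u)) - eU - rad p < 3 * (s * eU) + 4 * eU"
    using unsep unfolding ball_unseparated_def eU_def[symmetric] by (simp add: algebra_simps)
  ultimately have "eU \<le> rad p" "dist p (bb_center (pts u)) \<le> rad p + (3 * (s * eU) + 5 * eU)"
    using dist_triangle[of p "bb_center (pts w)" "bb_center (pts u)"] \<open>0 \<le> eU\<close> \<open>eU \<le> eW\<close> by linarith+
  then show ?thesis
    unfolding eU_def by (simp add: algebra_simps)
qed

lemma charges_leaf_point: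
  fixes T :: "(real^'d) stree"
  assumes dT: "distinct (leaves T)" and e: "e \<in> set (ck_wspd (3 * s + 6) T)"
    and charges: "charges s rad e u" and s: "0 \<le> s"
  shows "leaf_point e \<in> pts T \<and> encl_rad (pts u) \<le> rad (leaf_point e) \<and>
    dist (leaf_point e) (bb_center (pts u)) \<le> rad (leaf_point e) + (3 * s + 5) * encl_rad (pts u) \<and>
    (\<forall>q\<in>pts u. separates e (leaf_point e) q)"
proof -
  define p where "p = leaf_point e"
  obtain w where w: "e = (SLeaf p, w) \<or> e = (w, SLeaf p)" "is_node w" "u \<in> set (subtrees w)"
    and unsep: "ball_unseparated s rad p u"
    using charges unfolding charges_def p_def by blast
  from w(1) have leaf: "SLeaf p \<in> set (subtrees T)" and sep: "well_sep (3 * s + 6) {p} (pts w)"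
    using ck_wspd_subtrees[OF dT e] w(2) by (auto simp: well_sep_commute)
  have "p \<in> pts T"
    using pts_subtree_subset[OF leaf] by simp
  moreover have "\<forall>q\<in>pts u. separates e p q"
    using w(1) pts_subtree_subset[OF w(3)] unfolding separates_def by auto
  ultimately show ?thesis
    using ball_unseparated_large_near[OF sep w(3) unsep s] unfolding p_def by blast
qed

text \<open>The pairs charging \<open>u\<close> all separate their leaf centre from the points of \<open>u\<close>, so these
  centres are distinct; their balls are disjoint, large and close to \<open>u\<close>.\<close>

lemma card_charging_pairs_le:
  fixes T :: "(real^'d) stree"
  assumes s: "0 \<le> s" and dT: "distinct (leaves T)"
    and disj: "disjoint_family_on (\<lambda>p. cball p (rad p)) (pts T)" and u: "u \<in> set (subtrees T)"
  shows "real (card {e \<in> set (ck_wspd (3 * s + 6) T). charges s rad e u})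
    \<le> (2 * (3 * s + 6) * sqrt (real CARD('d)) + 5) ^ CARD('d)"
proof (cases "is_node u")
  case False
  then show ?thesis
    using s by (simp add: charges_def)
next
  case True
  let ?L = "set (ck_wspd (3 * s + 6) T)"
  define E where "E = {e \<in> ?L. charges s rad e u}"
  define eu where "eu = encl_rad (pts u)"
  define B where "B = {p \<in> pts T. eu \<le> rad p \<and> dist p (bb_center (pts u)) \<le> rad p + (3 * s + 5) * eu}"
  have charging: "e \<in> ?L \<and> leaf_point e \<in> B \<and> (\<forall>q\<in>pts u. separates e (leaf_point e) q)" if "e \<in> E" for e
    using that charges_leaf_point[OF dT _ _ s, of e rad u] unfolding E_def B_def eu_def by blast
  have "inj_on leaf_point E"
  proof (rule inj_onI)
    fix e1 e2
    assume e: "e1 \<in> E" "e2 \<in> E" "leaf_point e1 = leaf_point e2"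
    obtain q where "q \<in> pts u"
      using pts_not_empty[of u] by blast
    then show "e1 = e2"
      using ck_wspd_separates_unique[OF dT, of e1 _ e2 "leaf_point e1" q] charging[OF e(1)] charging[OF e(2)] e(3)
      by auto
  qed
  moreover have "leaf_point ` E \<subseteq> B"
    using charging by blast
  moreover have "finite B \<and> real (card B) \<le> (2 * (3 * s + 5 + 1) * sqrt (real CARD('d)) + 5) ^ CARD('d)"
  proof (rule card_le_if_disjoint_cballs)
    obtain ul ur where "u = SNode ul ur"
      using True by (cases u) auto
    then show "0 < eu"
      using distinct_leaves_subtree[OF dT u] encl_rad_SNode_pos unfolding eu_def by blast
    show "0 \<le> 3 * s + 5"
      using s by simp
    show "disjoint_family_on (\<lambda>p. cball p (rad p)) B"
      by (rule disjoint_family_on_mono[OF _ disj]) (auto simp: B_def)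
  qed (auto simp: B_def)
  ultimately have "card E \<le> card B" "real (card B) \<le> (2 * (3 * s + 6) * sqrt (real CARD('d)) + 5) ^ CARD('d)"
    using card_inj_on_le by (auto simp: add.assoc)
  then show ?thesis
    unfolding E_def by linarith
qed

lemma sum_card_filter_swap:
  assumes "finite E" "finite U"
  shows "(\<Sum>e\<in>E. card {u \<in> U. R e u}) = (\<Sum>u\<in>U. card {e \<in> E. R e u})"
proof -
  have "card {u \<in> U. R e u} = (\<Sum>u\<in>U. if R e u then 1 else 0)" "card {e \<in> E. R e u} = (\<Sum>e\<in>E. if R e u then 1 else 0)"
    for e u
    using assms by (simp_all add: sum.If_cases Int_def)
  then show ?thesis
    by (simp add: sum.swap[of _ E])
qed

text \<open>Every pair of the decomposition yields one pair of balls, plus two for each node at which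
  FindPairs splits it; each node is charged a bounded number of times.\<close>

lemma length_ball_pairs_le:
  fixes T :: "(real^'d) stree"
  assumes s: "0 \<le> s" and dT: "distinct (leaves T)" and split: "split_tree T"
    and disj: "disjoint_family_on (\<lambda>p. cball p (rad p)) (pts T)"
  shows "real (length (concat (map (process_pair s rad) (ck_wspd (3 * s + 6) T))))
    \<le> 2 * (1 + 2 * (4 * (3 * s + 9) * sqrt (real CARD('d)) + 5) ^ CARD('d)
           + 2 * (2 * (3 * s + 6) * sqrt (real CARD('d)) + 5) ^ CARD('d)) * real (length (leaves T))"
proof -
  let ?L = "ck_wspd (3 * s + 6) T" and ?ST = "set (subtrees T)"
  define K1 where "K1 = (4 * (3 * s + 9) * sqrt (real CARD('d)) + 5) ^ CARD('d)"
  define K2 where "K2 = (2 * (3 * s + 6) * sqrt (real CARD('d)) + 5) ^ CARD('d)"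
  have "K1 \<ge> 0" "K2 \<ge> 0"
    unfolding K1_def K2_def using s by simp_all
  have "length (concat (map (process_pair s rad) ?L)) = (\<Sum>e\<in>set ?L. length (process_pair s rad e))"
    by (simp add: length_concat sum_list_distinct_conv_sum_set[OF distinct_ck_wspd[OF dT]])
  also have "\<dots> \<le> (\<Sum>e\<in>set ?L. 1 + 2 * card {u \<in> ?ST. charges s rad e u})"
    by (rule sum_mono) (rule length_process_pair_le[OF dT])
  also have "\<dots> = card (set ?L) + 2 * (\<Sum>e\<in>set ?L. card {u \<in> ?ST. charges s rad e u})"
    by (simp only: sum.distrib card_eq_sum sum_distrib_left)
  also have "\<dots> = card (set ?L) + 2 * (\<Sum>u\<in>?ST. card {e \<in> set ?L. charges s rad e u})"
    using sum_card_filter_swap[of "set ?L" ?ST "charges s rad"] by simp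
  finally have "real (length (concat (map (process_pair s rad) ?L)))
      \<le> real (card (set ?L)) + 2 * (\<Sum>u\<in>?ST. real (card {e \<in> set ?L. charges s rad e u}))"
    by (simp flip: of_nat_sum)
  also have "\<dots> \<le> (1 + 2 * K1) * real (card ?ST) + 2 * (\<Sum>u\<in>?ST. K2)"
    using card_ck_wspd_le[of "3 * s + 6", OF _ dT split] card_charging_pairs_le[OF s dT disj] s
    by (intro add_mono mult_left_mono sum_mono) (simp_all add: K1_def K2_def algebra_simps)
  also have "\<dots> = (1 + 2 * K1 + 2 * K2) * real (card ?ST)"
    by (simp add: algebra_simps)
  also have "\<dots> \<le> (1 + 2 * K1 + 2 * K2) * (2 * real (length (leaves T)))"
    using card_length[of "subtrees T"] length_subtrees[of T] \<open>K1 \<ge> 0\<close> \<open>K2 \<ge> 0\<close>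
    by (intro mult_left_mono) simp_all
  finally show ?thesis
    unfolding K1_def K2_def by (simp add: algebra_simps)
qed

lemma disjoint_family_cballs_inv_into:
  assumes r: "\<forall>i<n. 0 \<le> r i"
    and disj: "\<forall>i<n. \<forall>j<n. i \<noteq> j \<longrightarrow> cball (c i) (r i) \<inter> cball (c j) (r j) = {}"
  shows "disjoint_family_on (\<lambda>p. cball p (r (inv_into {..<n} c p))) (c ` {..<n})"
proof -
  have "inj_on c {..<n}"
    using r disj by (intro inj_onI) (metis centre_in_cball disjoint_iff lessThan_iff)
  then have "r (inv_into {..<n} c (c i)) = r i" if "i < n" for i
    using that by simp
  then show ?thesis
    using disj unfolding disjoint_family_on_def by auto
qed

theorem corollary1:
  fixes s :: real
  assumes "s > 0"
  shows "\<exists>C::real. \<forall>(n::nat) (c :: nat \<Rightarrow> real^'d) (r :: nat \<Rightarrow> real) (T :: (real^'d) stree).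
           (\<forall>i<n. 0 \<le> r i) \<and>
           (\<forall>i<n. \<forall>j<n. i \<noteq> j \<longrightarrow> cball (c i) (r i) \<inter> cball (c j) (r j) = {}) \<and>
           split_tree T \<and> distinct (leaves T) \<and> set (leaves T) = c ` {..<n}
           \<longrightarrow> real (length (compute_wspd s c r n T)) \<le> C * real n"
proof -
  define C where "C = 2 * (1 + 2 * (4 * (3 * s + 9) * sqrt (real CARD('d)) + 5) ^ CARD('d)
    + 2 * (2 * (3 * s + 6) * sqrt (real CARD('d)) + 5) ^ CARD('d))"
  have "0 \<le> C"
    unfolding C_def using assms by simp
  show ?thesis
  proof (intro exI[of _ C] allI impI, elim conjE)
    fix n and c :: "nat \<Rightarrow> real^'d" and r :: "nat \<Rightarrow> real" and T :: "(real^'d) stree"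
    assume r: "\<forall>i<n. 0 \<le> r i"
      and disj: "\<forall>i<n. \<forall>j<n. i \<noteq> j \<longrightarrow> cball (c i) (r i) \<inter> cball (c j) (r j) = {}"
      and split: "split_tree T" and dT: "distinct (leaves T)" and leaves: "set (leaves T) = c ` {..<n}"
    define rad where "rad p = r (inv_into {..<n} c p)" for p
    have "disjoint_family_on (\<lambda>p. cball p (rad p)) (pts T)"
      using disjoint_family_cballs_inv_into[OF r disj] leaves unfolding rad_def pts_def by simp
    then have "real (length (compute_wspd s c r n T)) \<le> C * real (length (leaves T))"
      using length_ball_pairs_le[of s T rad] assms dT split
      unfolding compute_wspd_def rad_def C_def by (simp add: Let_def)
    also have "\<dots> \<le> C * real n"
      using distinct_card[OF dT] card_image_le[of "{..<n}" c] leaves \<open>0 \<le> C\<close>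
      by (intro mult_left_mono) simp_all
    finally show "real (length (compute_wspd s c r n T)) \<le> C * real n" .
  qed
qed

end
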